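(* Let $p\ge1$ and let $\mathcal A=(A_n)_{n\ge0}$ be a sequence of positive invertible $p\times p$ matrices with $\sup_n\|A_n\|<\infty$ such that the matrix-valued weighted shift $W_{\mathcal A}$ on $\ell^2(\mathbb C^p)$ is cubically hyponormal. Suppose that $A_kx=A_{k+1}x$ for some unit vector $x\in\mathbb C^p$ and some $k\ge1$. Then $A_nx=A_kx$ for every $n\ge k$.
   Context: $\ell^2(\mathbb C^p)=\{(x_n)_{n\ge0}: x_n\in\mathbb C^p,\ \sum_n\|x_n\|^2<\infty\}$; the matrix-valued weighted shift is $W_{\mathcal A}(x_0,x_1,\dots)=(0,A_0x_0,A_1x_1,\dots)$. A bounded operator $T$ is hyponormal if $T^*T-TT^*\ge0$, and cubically hyponormal if $T+\lambda T^2+\mu T^3$ is hyponormal for all $\lambda,\mu\in\mathbb C$. *)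

theory Defs
  imports "HOL-Analysis.Analysis"
begin

text \<open>Vectors of C^p are modelled as complex^'p for a finite index type 'p (p = CARD('p) >= 1).
  Standard inner product on C^p, linear in the first argument.\<close>
definition vinner :: "complex^'p \<Rightarrow> complex^'p \<Rightarrow> complex" where
  "vinner x y = (\<Sum>i\<in>UNIV. x $ i * cnj (y $ i))"

definition pos_matrix :: "complex^'p^'p \<Rightarrow> bool" where
  "pos_matrix A \<longleftrightarrow> (\<forall>v. vinner (A *v v) v \<in> \<real> \<and> 0 \<le> Re (vinner (A *v v) v))"

definition ell2 :: "(nat \<Rightarrow> complex^'p) set" where
  "ell2 = {f. summable (\<lambda>n. (norm (f n))^2)}"

definition l2inner :: "(nat \<Rightarrow> complex^'p) \<Rightarrow> (nat \<Rightarrow> complex^'p) \<Rightarrow> complex" where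
  "l2inner f g = (\<Sum>n. vinner (f n) (g n))"

definition wshift :: "(nat \<Rightarrow> complex^'p^'p) \<Rightarrow> (nat \<Rightarrow> complex^'p) \<Rightarrow> (nat \<Rightarrow> complex^'p)" where
  "wshift A f = (\<lambda>n. if n = 0 then 0 else A (n - 1) *v f (n - 1))"

definition is_adjoint ::
  "((nat \<Rightarrow> complex^'p) \<Rightarrow> (nat \<Rightarrow> complex^'p)) \<Rightarrow> ((nat \<Rightarrow> complex^'p) \<Rightarrow> (nat \<Rightarrow> complex^'p)) \<Rightarrow> bool" where
  "is_adjoint T S \<longleftrightarrow> (\<forall>g\<in>ell2. S g \<in> ell2) \<and>
     (\<forall>f\<in>ell2. \<forall>g\<in>ell2. l2inner (T f) g = l2inner f (S g))"

definition hyponormal :: "((nat \<Rightarrow> complex^'p) \<Rightarrow> (nat \<Rightarrow> complex^'p)) \<Rightarrow> bool" where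
  "hyponormal T \<longleftrightarrow> (\<forall>f\<in>ell2. T f \<in> ell2) \<and>
     (\<exists>S. is_adjoint T S \<and>
        (\<forall>f\<in>ell2. l2inner (S (T f) - T (S f)) f \<in> \<real> \<and> 0 \<le> Re (l2inner (S (T f) - T (S f)) f)))"

definition cubic_comb ::
  "((nat \<Rightarrow> complex^'p) \<Rightarrow> (nat \<Rightarrow> complex^'p)) \<Rightarrow> complex \<Rightarrow> complex \<Rightarrow> (nat \<Rightarrow> complex^'p) \<Rightarrow> (nat \<Rightarrow> complex^'p)" where
  "cubic_comb T l m f = (\<lambda>n. T f n + l *s T (T f) n + m *s T (T (T f)) n)"

definition cubically_hyponormal :: "((nat \<Rightarrow> complex^'p) \<Rightarrow> (nat \<Rightarrow> complex^'p)) \<Rightarrow> bool" where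
  "cubically_hyponormal T \<longleftrightarrow> (\<forall>l m. hyponormal (cubic_comb T l m))"

end

theory Submission
  imports Defs
begin

(* Hyponormality of W gives A_k^2 <= A_(k+1)^2, so the kernel of A_(k+1) - A_k is invariant
   under the hermitian matrix A_k and hence spanned by common eigenvectors v of A_k and A_(k+1),
   with eigenvalue c > 0. If A_(j+1) v = A_(j+2) v = c v, testing hyponormality of W + eps W^3
   against suitable finitely supported vectors gives eps^2 c^2 |B^2 v - c^2 v|^2 = O(eps^4) for
   B = A_(j+3); so B^2 v = c^2 v, and B v = c v by positivity of B. Thus each such eigenvector
   stays an eigenvector of all later weights, and linearity finishes the proof. *)

section \<open>The inner product of \<open>\<complex>\<^sup>p\<close>\<close>

lemma vinner_cnj: "vinner (x::complex^'p) y = cnj (vinner y x)"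
  by (simp add: vinner_def mult.commute)

lemma vinner_add_left: "vinner (x + y) (z::complex^'p) = vinner x z + vinner y z"
  by (simp add: vinner_def distrib_right sum.distrib)

lemma vinner_add_right: "vinner z (x + y::complex^'p) = vinner z x + vinner z y"
  by (simp add: vinner_def distrib_left sum.distrib)

lemma vinner_diff_left: "vinner (x - y) (z::complex^'p) = vinner x z - vinner y z"
  by (simp add: vinner_def left_diff_distrib sum_subtractf)

lemma vinner_diff_right: "vinner z (x - y::complex^'p) = vinner z x - vinner z y"
  by (simp add: vinner_def right_diff_distrib sum_subtractf)

lemma vinner_scale_left: "vinner (a *s x) (z::complex^'p) = a * vinner x z"
  by (simp add: vinner_def sum_distrib_left mult.assoc)

lemma vinner_scale_right: "vinner z (a *s x::complex^'p) = cnj a * vinner z x"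
  by (simp add: vinner_def sum_distrib_left mult_ac)

lemma vinner_zero_left [simp]: "vinner 0 (z::complex^'p) = 0"
  by (simp add: vinner_def)

lemma vinner_zero_right [simp]: "vinner z (0::complex^'p) = 0"
  by (simp add: vinner_def)

lemma vinner_minus_left: "vinner (- x) (z::complex^'p) = - vinner x z"
  by (simp add: vinner_def sum_negf)

lemma vinner_minus_right: "vinner z (- x::complex^'p) = - vinner z x"
  by (simp add: vinner_def sum_negf)

lemmas vinner_linear = vinner_add_left vinner_add_right vinner_diff_left vinner_diff_right
  vinner_scale_left vinner_scale_right vinner_minus_left vinner_minus_right

lemma vinner_self: "vinner (x::complex^'p) x = complex_of_real ((norm x)\<^sup>2)"
proof -
  have "vinner x x = (\<Sum>i\<in>UNIV. complex_of_real ((norm (x$i))\<^sup>2))"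
    unfolding vinner_def
    by (rule sum.cong) (simp_all add: complex_norm_square[symmetric] del: of_real_power)
  also have "\<dots> = complex_of_real (\<Sum>i\<in>UNIV. (norm (x$i))\<^sup>2)" by simp
  also have "(\<Sum>i\<in>UNIV. (norm (x$i))\<^sup>2) = (norm x)\<^sup>2"
    unfolding norm_vec_def L2_set_def by (simp add: sum_nonneg)
  finally show ?thesis .
qed

lemma vinner_self_eq_0 [simp]: "vinner (x::complex^'p) x = 0 \<longleftrightarrow> x = 0"
  by (simp add: vinner_self)

lemma norm_vec_square_Re: "(norm (x::complex^'p))\<^sup>2 = Re (vinner x x)"
  by (simp add: vinner_self)

lemma norm_vector_smult: "norm (a *s (x::'a::real_normed_div_algebra^'n)) = norm a * norm x"
  unfolding norm_vec_def by (simp add: L2_set_right_distrib norm_mult)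

lemma scaleR_eq_complex_scale: "r *\<^sub>R (a::complex^'n) = complex_of_real r *s a"
  unfolding vec_eq_iff vector_scaleR_component vector_smult_component
  by (simp add: scaleR_conv_of_real)

section \<open>Hermitian matrices and their eigenvectors\<close>

definition hermitian_matrix :: "complex^'p^'p \<Rightarrow> bool" where
  "hermitian_matrix M \<longleftrightarrow> (\<forall>a b. vinner (M *v a) b = vinner a (M *v b))"

lemma hermitian_vinner: "hermitian_matrix M \<Longrightarrow> vinner (M *v a) b = vinner a (M *v b)"
  by (simp add: hermitian_matrix_def)

lemma hermitian_vinner_square:
  "hermitian_matrix M \<Longrightarrow> vinner (M *v (M *v z)) z = complex_of_real ((norm (M *v z))\<^sup>2)"
  by (simp add: hermitian_vinner vinner_self)

text \<open>Polarization: a form that is real on the diagonal is hermitian.\<close>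
lemma pos_matrix_hermitian:
  fixes M :: "complex^'p^'p"
  assumes "pos_matrix M"
  shows "hermitian_matrix M"
  unfolding hermitian_matrix_def
proof (intro allI)
  fix x y :: "complex^'p"
  define s where "s a b = vinner (M *v a) b" for a b
  have real: "Im (s a a) = 0" for a
    using assms unfolding pos_matrix_def s_def by (metis Reals_cases Im_complex_of_real)
  have e1: "s (x + y) (x + y) = s x x + s y y + s x y + s y x"
    unfolding s_def by (simp add: matrix_vector_right_distrib vinner_add_left vinner_add_right)
  have e2: "s (x + \<i> *s y) (x + \<i> *s y) = s x x + s y y - \<i> * s x y + \<i> * s y x"
    unfolding s_def by (simp add: matrix_vector_right_distrib vector_scalar_commute vinner_linear
        algebra_simps)
  have "Im (s x y) + Im (s y x) = 0" using real[of "x + y"] real[of x] real[of y] e1 by simp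
  moreover have "Re (s y x) - Re (s x y) = 0"
    using real[of "x + \<i> *s y"] real[of x] real[of y] e2 by simp
  ultimately have "s y x = cnj (s x y)" by (simp add: complex_eq_iff)
  then show "vinner (M *v x) y = vinner x (M *v y)"
    unfolding s_def by (metis vinner_cnj complex_cnj_cnj)
qed

lemma nonpos_if_le_all_pos_mult:
  fixes a b :: real
  assumes "\<And>e. e > 0 \<Longrightarrow> a \<le> e * b"
  shows "a \<le> 0"
proof (cases "b > 0")
  case True
  show ?thesis
  proof (rule field_le_epsilon)
    show "a \<le> 0 + e" if "e > 0" for e
      using assms[of "e / b"] True that by simp
  qed
next
  case False
  then show ?thesis using assms[of 1] by simp
qed

lemma hermitian_nonneg_form_eq_0:
  fixes M :: "complex^'p^'p"
  assumes M: "hermitian_matrix M"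
    and S: "vec.subspace S" and nonneg: "\<And>z. z \<in> S \<Longrightarrow> 0 \<le> Re (vinner (M *v z) z)"
    and v: "v \<in> S" "M *v v \<in> S" and zero: "Re (vinner (M *v v) v) = 0"
  shows "M *v v = 0"
proof -
  define q where "q = M *v v"
  define a where "a = Re (vinner (M *v q) q)"
  have "2 * (norm q)\<^sup>2 \<le> e * a" if e: "e > 0" for e
  proof -
    let ?t = "complex_of_real (- e)"
    have "v + ?t *s q \<in> S"
      using v S unfolding q_def by (simp add: vec.subspace_diff vec.subspace_scale)
    then have "0 \<le> Re (vinner (M *v (v + ?t *s q)) (v + ?t *s q))" by (rule nonneg)
    also have "\<dots> = e * (e * a - 2 * (norm q)\<^sup>2)"
      using zero by (simp add: matrix_vector_right_distrib vector_scalar_commute vinner_linear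
          hermitian_vinner[OF M, of q] vinner_self a_def q_def[symmetric] algebra_simps
          power2_eq_square)
    finally show ?thesis using e by (simp add: zero_le_mult_iff)
  qed
  then have "2 * (norm q)\<^sup>2 \<le> 0" by (rule nonpos_if_le_all_pos_mult)
  then show ?thesis by (simp add: q_def)
qed

lemma vec_subspace_imp_subspace: "vec.subspace (S::(complex^'p) set) \<Longrightarrow> subspace S"
  unfolding vec.subspace_def subspace_def by (simp add: scaleR_eq_complex_scale)

lemma mat_mult_vector: "mat a *v (x::'a::comm_semiring_1^'n) = a *s x"
proof -
  have "(mat a *v x) $ i = (\<Sum>j\<in>UNIV. (if i = j then a else 0) * x $ j)" for i
    unfolding matrix_vector_mult_def mat_def by simp
  also have "\<dots> i = (\<Sum>j\<in>UNIV. if i = j then a * x $ j else 0)" for i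
    by (rule sum.cong) auto
  finally show ?thesis by (simp add: vec_eq_iff)
qed

text \<open>The maximum of the Rayleigh quotient on the unit sphere of \<open>S\<close> is an eigenvalue.\<close>
lemma hermitian_invariant_subspace_has_eigenvector:
  fixes C :: "complex^'p^'p"
  assumes C: "hermitian_matrix C" and S: "vec.subspace S" and inv: "\<And>a. a \<in> S \<Longrightarrow> C *v a \<in> S"
    and a: "a \<in> S" "a \<noteq> 0"
  obtains v c where "v \<in> S" "v \<noteq> 0" "C *v v = complex_of_real c *s v"
proof -
  have sub: "subspace S" using S by (rule vec_subspace_imp_subspace)
  let ?K = "S \<inter> sphere 0 1"
  have "compact ?K" using closed_subspace[OF sub] by (intro closed_Int_compact) auto
  moreover have "(1 / norm a) *\<^sub>R a \<in> ?K" using a sub by (simp add: subspace_scale)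
  moreover have "continuous_on ?K (\<lambda>x. Re (vinner (C *v x) x))"
    unfolding vinner_def matrix_vector_mult_def by (intro continuous_intros)
  ultimately obtain v where vK: "v \<in> ?K"
    and vmax: "\<And>y. y \<in> ?K \<Longrightarrow> Re (vinner (C *v y) y) \<le> Re (vinner (C *v v) v)"
    using continuous_attains_sup[of ?K] by blast
  define c where "c = Re (vinner (C *v v) v)"
  have vS: "v \<in> S" and vn: "norm v = 1" using vK by auto
  have bound: "Re (vinner (C *v u) u) \<le> c * (norm u)\<^sup>2" if uS: "u \<in> S" for u
  proof (cases "u = 0")
    case False
    define u' where "u' = (1 / norm u) *\<^sub>R u"
    have "u' \<in> ?K" using False uS sub by (simp add: u'_def subspace_scale)
    then have "Re (vinner (C *v u') u') \<le> c" using vmax c_def by blast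
    moreover have "Re (vinner (C *v u') u') = Re (vinner (C *v u) u) / (norm u)\<^sup>2"
      unfolding u'_def scaleR_eq_complex_scale
      by (simp add: vector_scalar_commute vinner_linear power2_eq_square)
    ultimately show ?thesis using False by (simp add: field_simps)
  qed simp
  define M where "M = mat (complex_of_real c) - C"
  have Mv: "M *v x = complex_of_real c *s x - C *v x" for x
    by (simp add: M_def matrix_vector_mult_diff_rdistrib mat_mult_vector)
  have "M *v v = 0"
  proof (rule hermitian_nonneg_form_eq_0[OF _ S])
    show "hermitian_matrix M"
      unfolding hermitian_matrix_def Mv by (simp add: vinner_linear hermitian_vinner[OF C])
    show "0 \<le> Re (vinner (M *v z) z)" if "z \<in> S" for z
      using bound[OF that] by (simp add: Mv vinner_linear vinner_self)
    show "M *v v \<in> S"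
      unfolding Mv using S vS inv[OF vS] by (simp add: vec.subspace_diff vec.subspace_scale)
    show "Re (vinner (M *v v) v) = 0" by (simp add: Mv vinner_linear vinner_self vn c_def)
  qed (rule vS)
  then have "C *v v = complex_of_real c *s v" by (simp add: Mv)
  with vS vn show ?thesis using that by fastforce
qed

text \<open>Split off one eigenvector and pass to its orthogonal complement in \<open>S\<close>.\<close>
lemma hermitian_invariant_subspace_eigenvector_span:
  fixes C :: "complex^'p^'p"
  assumes C: "hermitian_matrix C"
  shows "vec.subspace S \<Longrightarrow> (\<And>a. a \<in> S \<Longrightarrow> C *v a \<in> S)
    \<Longrightarrow> S \<subseteq> vec.span {v \<in> S. \<exists>c. C *v v = complex_of_real c *s v}"
proof (induction "vec.dim S" arbitrary: S rule: less_induct)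
  case less
  let ?E = "\<lambda>S. {v \<in> S. \<exists>c. C *v v = complex_of_real c *s v}"
  show ?case
  proof (cases "S \<subseteq> {0}")
    case True
    then show ?thesis using vec.span_zero by auto
  next
    case False
    then obtain a where "a \<in> S" "a \<noteq> 0" by auto
    then obtain v c where vS: "v \<in> S" and v0: "v \<noteq> 0" and Cv: "C *v v = complex_of_real c *s v"
      using hermitian_invariant_subspace_has_eigenvector[OF C less.prems] by blast
    define S' where "S' = {w \<in> S. vinner w v = 0}"
    have S': "vec.subspace S'"
      using less.prems(1) unfolding vec.subspace_def S'_def by (auto simp: vinner_linear)
    have "C *v w \<in> S'" if "w \<in> S'" for w
      using that less.prems(2) unfolding S'_def by (auto simp: hermitian_vinner[OF C] Cv vinner_linear)
    moreover have "vec.dim S' < vec.dim S"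
    proof (rule vec.dim_psubset)
      have "v \<notin> S'" using v0 by (simp add: S'_def)
      moreover have "S' \<subseteq> S" by (auto simp: S'_def)
      ultimately have "S' \<subset> S" using vS by blast
      then show "vec.span S' \<subset> vec.span S"
        by (metis S' less.prems(1) vec.span_eq_iff)
    qed
    ultimately have IH: "S' \<subseteq> vec.span (?E S')"
      using less.hyps S' by blast
    have span_mono: "vec.span (?E S') \<subseteq> vec.span (?E S)"
      by (rule vec.span_mono) (auto simp: S'_def)
    show ?thesis
    proof
      fix x assume xS: "x \<in> S"
      define \<alpha> where "\<alpha> = vinner x v / vinner v v"
      have "x - \<alpha> *s v \<in> S'"
        using xS vS less.prems(1) v0 by (simp add: S'_def vec.subspace_diff vec.subspace_scale
            vinner_linear \<alpha>_def)
      then have "x - \<alpha> *s v \<in> vec.span (?E S)" using IH span_mono by blast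
      moreover have "\<alpha> *s v \<in> vec.span (?E S)"
        using vS Cv by (intro vec.span_scale vec.span_base) auto
      ultimately have "(x - \<alpha> *s v) + \<alpha> *s v \<in> vec.span (?E S)" by (rule vec.span_add)
      then show "x \<in> vec.span (?E S)" by simp
    qed
  qed
qed

section \<open>Testing hyponormality on finitely supported sequences\<close>

lemma finite_support_ell2: "finite F \<Longrightarrow> (\<And>n. n \<notin> F \<Longrightarrow> f n = 0) \<Longrightarrow> f \<in> ell2"
  unfolding ell2_def by (auto intro!: summable_finite[of F])

lemma l2inner_finite_support_right:
  "finite F \<Longrightarrow> (\<And>n. n \<notin> F \<Longrightarrow> f n = 0) \<Longrightarrow> l2inner g f = (\<Sum>n\<in>F. vinner (g n) (f n))"
  unfolding l2inner_def by (intro suminf_finite) auto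

lemma l2inner_finite_support_left:
  "finite F \<Longrightarrow> (\<And>n. n \<notin> F \<Longrightarrow> g n = 0) \<Longrightarrow> l2inner g f = (\<Sum>n\<in>F. vinner (g n) (f n))"
  unfolding l2inner_def by (intro suminf_finite) auto

lemma l2inner_self: "g \<in> ell2 \<Longrightarrow> l2inner g g = complex_of_real (\<Sum>n. (norm (g n))\<^sup>2)"
  unfolding l2inner_def ell2_def by (simp add: vinner_self suminf_of_real)

lemma Re_vinner_le: "2 * Re (vinner (h::complex^'p) g) - (norm h)\<^sup>2 \<le> (norm g)\<^sup>2"
proof -
  have "vinner (g - h) (g - h) = vinner g g - vinner g h - vinner h g + vinner h h"
    by (simp add: vinner_diff_left vinner_diff_right)
  then have "Re (vinner (g - h) (g - h)) = (norm g)\<^sup>2 - 2 * Re (vinner h g) + (norm h)\<^sup>2"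
    using vinner_cnj[of g h] by (simp add: vinner_self)
  moreover have "0 \<le> Re (vinner (g - h) (g - h))" by (simp add: vinner_self)
  ultimately show ?thesis by simp
qed

lemma hyponormal_adjoint_norm_le:
  assumes hyp: "hyponormal T" and F: "finite F" "\<And>n. n \<notin> F \<Longrightarrow> f n = 0"
  obtains g where "g \<in> ell2" "\<And>h. h \<in> ell2 \<Longrightarrow> l2inner (T h) f = l2inner h g"
    "(\<Sum>n. (norm (g n))\<^sup>2) \<le> (\<Sum>n. (norm (T f n))\<^sup>2)"
proof -
  obtain S where adj: "is_adjoint T S"
    and hypS: "0 \<le> Re (l2inner (S (T f) - T (S f)) f)"
    using hyp F finite_support_ell2 unfolding hyponormal_def by blast
  have f: "f \<in> ell2" using F by (rule finite_support_ell2)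
  then have Tf: "T f \<in> ell2" using hyp by (simp add: hyponormal_def)
  have adjoint: "\<And>a b. a \<in> ell2 \<Longrightarrow> b \<in> ell2 \<Longrightarrow> l2inner (T a) b = l2inner a (S b)"
    and Sf: "S f \<in> ell2"
    using adj f unfolding is_adjoint_def by auto
  have "l2inner (S (T f)) f = cnj (l2inner f (S (T f)))"
    using F by (simp add: l2inner_finite_support_right l2inner_finite_support_left vinner_cnj[of "f _"])
  also have "l2inner f (S (T f)) = l2inner (T f) (T f)" using adjoint[OF f Tf] by simp
  finally have TT: "Re (l2inner (S (T f)) f) = (\<Sum>n. (norm (T f n))\<^sup>2)"
    using Tf by (simp add: l2inner_self)
  have "l2inner (T (S f)) f = l2inner (S f) (S f)" using adjoint[OF Sf f] .
  then have SS: "Re (l2inner (T (S f)) f) = (\<Sum>n. (norm (S f n))\<^sup>2)"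
    using Sf by (simp add: l2inner_self)
  have "l2inner (S (T f) - T (S f)) f = l2inner (S (T f)) f - l2inner (T (S f)) f"
    using F by (simp add: l2inner_finite_support_right vinner_diff_left sum_subtractf)
  then have "(\<Sum>n. (norm (S f n))\<^sup>2) \<le> (\<Sum>n. (norm (T f n))\<^sup>2)"
    using hypS TT SS by simp
  then show ?thesis using that Sf adjoint f by blast
qed

text \<open>Pairing \<open>T\<^sup>* f\<close> with a second vector \<open>h\<close> turns \<open>\<parallel>T\<^sup>* f\<parallel> \<le> \<parallel>T f\<parallel>\<close> into an
  inequality that no longer mentions the adjoint.\<close>
lemma hyponormal_test_ineq:
  assumes hyp: "hyponormal T"
    and F: "finite F" "\<And>n. n \<notin> F \<Longrightarrow> f n = 0"
    and H: "finite H" "\<And>n. n \<notin> H \<Longrightarrow> h n = 0"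
  shows "2 * Re (\<Sum>n\<in>F. vinner (T h n) (f n)) - (\<Sum>n\<in>H. (norm (h n))\<^sup>2)
           \<le> (\<Sum>n. (norm (T f n))\<^sup>2)"
proof -
  obtain g where g: "g \<in> ell2" and adj: "\<And>h. h \<in> ell2 \<Longrightarrow> l2inner (T h) f = l2inner h g"
    and le: "(\<Sum>n. (norm (g n))\<^sup>2) \<le> (\<Sum>n. (norm (T f n))\<^sup>2)"
    using hyponormal_adjoint_norm_le[of T F f, OF hyp F] by blast
  have "(\<Sum>n\<in>F. vinner (T h n) (f n)) = l2inner (T h) f"
    using F by (simp add: l2inner_finite_support_right)
  also have "\<dots> = l2inner h g" using adj H by (simp add: finite_support_ell2)
  also have "\<dots> = (\<Sum>n\<in>H. vinner (h n) (g n))" using H by (rule l2inner_finite_support_left)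
  finally have "2 * Re (\<Sum>n\<in>F. vinner (T h n) (f n)) - (\<Sum>n\<in>H. (norm (h n))\<^sup>2)
      = (\<Sum>n\<in>H. 2 * Re (vinner (h n) (g n)) - (norm (h n))\<^sup>2)"
    by (simp add: sum_subtractf sum_distrib_left)
  also have "\<dots> \<le> (\<Sum>n\<in>H. (norm (g n))\<^sup>2)" by (intro sum_mono Re_vinner_le)
  also have "\<dots> \<le> (\<Sum>n. (norm (g n))\<^sup>2)"
    using g H by (intro sum_le_suminf) (auto simp: ell2_def)
  finally show ?thesis using le by linarith
qed

section \<open>The weighted shift\<close>

lemma cubic_comb_0: "cubic_comb T 0 e g n = T g n + e *s T (T (T g)) n"
  by (simp add: cubic_comb_def)

lemma wshift_0 [simp]: "wshift A g 0 = 0"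
  by (simp add: wshift_def)

lemma wshift_Suc [simp]: "wshift A g (Suc n) = A n *v g n"
  by (simp add: wshift_def)

lemma wshift_support: "(\<And>n. n \<notin> F \<Longrightarrow> g n = 0) \<Longrightarrow> n \<notin> Suc ` F \<Longrightarrow> wshift A g n = 0"
  by (cases n) (simp_all add: wshift_def image_iff)

lemma cubic_comb_wshift_support:
  assumes "\<And>n. n \<notin> F \<Longrightarrow> g n = 0" "n \<notin> Suc ` F \<union> Suc ` Suc ` Suc ` F"
  shows "cubic_comb (wshift A) 0 e g n = 0"
proof -
  have "wshift A (wshift A (wshift A g)) n = 0"
    by (rule wshift_support[of "Suc ` Suc ` F"], rule wshift_support[of "Suc ` F"],
        rule wshift_support[of F]) (use assms in auto)
  then show ?thesis using wshift_support[of F g n] assms by (simp add: cubic_comb_0)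
qed

lemma wshift_cubic_test_ineq:
  fixes A :: "nat \<Rightarrow> complex^'p^'p" and j :: nat and c \<epsilon> :: real
  defines "B \<equiv> A (j + 3)"
  assumes hyp: "hyponormal (cubic_comb (wshift A) 0 (complex_of_real \<epsilon>))"
    and B: "hermitian_matrix B"
    and u: "A j *v u = - (complex_of_real c ^ 3) *s v"
    and v1: "A (j + 1) *v v = complex_of_real c *s v"
    and v2: "A (j + 2) *v v = complex_of_real c *s v"
  shows "\<epsilon>\<^sup>2 * c\<^sup>2 * (norm (B *v (B *v v) - complex_of_real (c\<^sup>2) *s v))\<^sup>2
    \<le> \<epsilon>^4 * (c^10 * (norm v)\<^sup>2 + c\<^sup>2 * (norm (A (j + 6) *v (A (j + 5) *v (A (j + 4) *v (B *v v)))))\<^sup>2)"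
proof -
  let ?e = "complex_of_real \<epsilon>" and ?c = "complex_of_real c"
  let ?T = "cubic_comb (wshift A) 0 ?e"
  define w where "w = B *v v"
  define y where "y = A (j + 6) *v (A (j + 5) *v (A (j + 4) *v w))"
  text \<open>\<open>h\<close> approximates \<open>T\<^sup>* f\<close>. The component \<open>\<epsilon> u\<close> of \<open>f\<close> contributes
    \<open>-\<epsilon>\<^sup>2 c\<^sup>6 \<parallel>v\<parallel>\<^sup>2\<close> to \<open>\<parallel>T f\<parallel>\<^sup>2\<close> at order \<open>\<epsilon>\<^sup>2\<close>, which completes the square
    \<open>\<parallel>B\<^sup>2 v - c\<^sup>2 v\<parallel>\<^sup>2\<close>.\<close>
  define f where "f m = (if m = j then ?e *s u else if m = j + 2 then v
    else if m = j + 4 then (- ?e * ?c) *s w else 0)" for m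
  define h where "h m = (if m = j + 1 then ?c *s v else if m = j + 3 then (- ?e * ?c) *s (B *v w)
    else 0)" for m
  have test: "2 * Re (\<Sum>n\<in>{j, j + 2, j + 4}. vinner (?T h n) (f n)) - (\<Sum>n\<in>{j + 1, j + 3}. (norm (h n))\<^sup>2)
      \<le> (\<Sum>n. (norm (?T f n))\<^sup>2)"
    by (rule hyponormal_test_ineq[OF hyp]) (auto simp: f_def h_def)
  have Av: "A (Suc j) *v v = ?c *s v" "A (Suc (Suc j)) *v v = ?c *s v"
    using v1 v2 by (simp_all add: eval_nat_numeral)
  have AB: "A (Suc (Suc (Suc j))) = B" by (simp add: B_def eval_nat_numeral)
  have h0: "wshift A h j = 0"
    by (rule wshift_support[of "{j + 1, j + 3}"]) (auto simp: h_def)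
  have Th: "?T h j = 0"
    by (rule cubic_comb_wshift_support[of "{j + 1, j + 3}"]) (auto simp: h_def)
  have Th': "?T h (Suc (Suc j)) = (?c * ?c) *s v"
    "?T h (j + 4) = (- ?e * ?c) *s (B *v (B *v w)) + (?e * ?c ^ 3) *s w"
    by (simp_all add: cubic_comb_0 h0 h_def Av AB w_def eval_nat_numeral
     vec.neg vec.scale vector_smult_assoc)
  have f0: "wshift A (wshift A f) j = 0"
    by (rule wshift_support[of "Suc ` {j, j + 2, j + 4}"], rule wshift_support[of "{j, j + 2, j + 4}"])
      (auto simp: f_def)
  have Tf: "?T f (Suc j) = complex_of_real (- \<epsilon> * c ^ 3) *s v"
    "?T f (j + 3) = complex_of_real (c - \<epsilon>\<^sup>2 * c ^ 5) *s v"
    "?T f (j + 5) = 0" "?T f (j + 7) = complex_of_real (- \<epsilon>\<^sup>2 * c) *s y"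
    by (simp_all add: cubic_comb_0 f0 f_def Av AB w_def y_def u eval_nat_numeral
     vec.neg vec.scale vector_smult_assoc)
  have "(\<Sum>n. (norm (?T f n))\<^sup>2) = (\<Sum>n\<in>{j + 1, j + 3, j + 5, j + 7}. (norm (?T f n))\<^sup>2)"
    by (rule suminf_finite)
      (auto simp: f_def split: if_splits intro!: cubic_comb_wshift_support[of "{j, j + 2, j + 4}"])
  also have "\<dots> = \<epsilon>\<^sup>2 * c ^ 6 * (norm v)\<^sup>2 + (c - \<epsilon>\<^sup>2 * c ^ 5)\<^sup>2 * (norm v)\<^sup>2 + \<epsilon> ^ 4 * c\<^sup>2 * (norm y)\<^sup>2"
    by (simp add: Tf norm_vector_smult power_mult_distrib power2_abs
        del: of_real_diff of_real_mult of_real_minus of_real_power)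
  finally have Tf_norm: "(\<Sum>n. (norm (?T f n))\<^sup>2) = \<dots>" .
  have h_norm: "(\<Sum>n\<in>{j + 1, j + 3}. (norm (h n))\<^sup>2) = c\<^sup>2 * (norm v)\<^sup>2 + \<epsilon>\<^sup>2 * c\<^sup>2 * (norm (B *v w))\<^sup>2"
    by (simp add: h_def norm_vector_smult norm_mult power_mult_distrib)
  have Th_f: "(\<Sum>n\<in>{j, j + 2, j + 4}. vinner (?T h n) (f n))
    = complex_of_real (c\<^sup>2 * (norm v)\<^sup>2 + \<epsilon>\<^sup>2 * c\<^sup>2 * (norm (B *v w))\<^sup>2 - \<epsilon>\<^sup>2 * c ^ 4 * (norm w)\<^sup>2)"
    by (simp add: Th Th' f_def vinner_linear vinner_self hermitian_vinner_square[OF B] algebra_simps)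
      (simp add: algebra_simps eval_nat_numeral)
  have sq: "(norm (B *v w - complex_of_real (c\<^sup>2) *s v))\<^sup>2
      = (norm (B *v w))\<^sup>2 - 2 * c\<^sup>2 * (norm w)\<^sup>2 + c ^ 4 * (norm v)\<^sup>2"
    by (simp add: norm_vec_square_Re vinner_linear hermitian_vinner[OF B] w_def)
      (simp add: vinner_self algebra_simps eval_nat_numeral)
  show ?thesis
    unfolding w_def[symmetric] y_def[symmetric] sq
    using test unfolding Tf_norm h_norm Th_f by (simp add: algebra_simps eval_nat_numeral)
qed

lemma cubically_hyponormal_imp_hyponormal:
  assumes "cubically_hyponormal T"
  shows "hyponormal T"
proof -
  have "cubic_comb T 0 0 = T" by (simp add: fun_eq_iff cubic_comb_def)
  then show ?thesis using assms unfolding cubically_hyponormal_def by metis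
qed

lemma hyponormal_wshift_norm_le:
  assumes hyp: "hyponormal (wshift A)" and A: "hermitian_matrix (A k)"
  shows "norm (A k *v z) \<le> norm (A (Suc k) *v z)"
proof -
  define f where "f m = (if m = Suc k then z else 0)" for m
  define h where "h m = (if m = k then A k *v z else 0)" for m
  have "2 * Re (\<Sum>n\<in>{Suc k}. vinner (wshift A h n) (f n)) - (\<Sum>n\<in>{k}. (norm (h n))\<^sup>2)
      \<le> (\<Sum>n. (norm (wshift A f n))\<^sup>2)"
    by (rule hyponormal_test_ineq[OF hyp]) (auto simp: f_def h_def)
  also have "(\<Sum>n. (norm (wshift A f n))\<^sup>2) = (\<Sum>n\<in>{Suc (Suc k)}. (norm (wshift A f n))\<^sup>2)"
    by (rule suminf_finite) (auto simp: f_def wshift_def)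
  finally have "(norm (A k *v z))\<^sup>2 \<le> (norm (A (Suc k) *v z))\<^sup>2"
    by (simp add: f_def h_def hermitian_vinner_square[OF A])
  then show ?thesis by (simp add: power2_le_iff_abs_le)
qed

text \<open>By the previous lemma \<open>A (Suc k) ** A (Suc k) - A k ** A k\<close> is positive semidefinite, and
  its form vanishes at \<open>v\<close>.\<close>
lemma hyponormal_wshift_weight_eq_invariant:
  assumes hyp: "hyponormal (wshift A)"
    and A: "hermitian_matrix (A k)" "hermitian_matrix (A (Suc k))"
    and v: "A (Suc k) *v v = A k *v v"
  shows "A (Suc k) *v (A k *v v) = A k *v (A k *v v)"
proof -
  define M where "M = A (Suc k) ** A (Suc k) - A k ** A k"
  have Mz: "M *v z = A (Suc k) *v (A (Suc k) *v z) - A k *v (A k *v z)" for z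
    by (simp add: M_def matrix_vector_mult_diff_rdistrib matrix_vector_mul_assoc)
  have form: "Re (vinner (M *v z) z) = (norm (A (Suc k) *v z))\<^sup>2 - (norm (A k *v z))\<^sup>2" for z
    by (simp add: Mz vinner_diff_left hermitian_vinner_square A)
  have "M *v v = 0"
  proof (rule hermitian_nonneg_form_eq_0[where S = UNIV])
    show "hermitian_matrix M"
      unfolding hermitian_matrix_def Mz by (simp add: vinner_diff_left vinner_diff_right hermitian_vinner A)
    show "0 \<le> Re (vinner (M *v z) z)" for z
      unfolding form using hyponormal_wshift_norm_le[OF hyp A(1)] by (simp add: power_mono)
  qed (simp_all add: form v)
  then show ?thesis using v by (simp add: Mz)
qed

lemma pos_matrix_square_eigen:
  fixes B :: "complex^'p^'p"
  assumes B: "pos_matrix B" and c: "c > 0"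
    and BB: "B *v (B *v v) = complex_of_real (c\<^sup>2) *s v"
  shows "B *v v = complex_of_real c *s v"
proof -
  define z where "z = B *v v - complex_of_real c *s v"
  have Bz: "B *v z = - complex_of_real c *s z"
    by (simp add: z_def vec.diff vec.scale BB vector_ssub_ldistrib vector_smult_assoc power2_eq_square)
  have "0 \<le> Re (vinner (B *v z) z)" using B by (simp add: pos_matrix_def)
  also have "\<dots> = - c * (norm z)\<^sup>2" by (simp add: Bz vinner_linear vinner_self)
  finally have "z = 0" using c by (simp add: mult_le_0_iff)
  then show ?thesis by (simp add: z_def)
qed

lemma pos_invertible_eigenvalue_pos:
  fixes M :: "complex^'p^'p"
  assumes "pos_matrix M" "invertible M" "v \<noteq> 0" "M *v v = complex_of_real c *s v"
  shows "c > 0"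
proof -
  have "0 \<le> Re (vinner (M *v v) v)" using assms(1) by (simp add: pos_matrix_def)
  also have "\<dots> = c * (norm v)\<^sup>2" using assms(4) by (simp add: vinner_linear vinner_self)
  finally have "0 \<le> c" using assms(3) by (simp add: zero_le_mult_iff)
  moreover have "M *v v \<noteq> 0"
    using assms(2,3) by (metis invertible_def matrix_vector_mul_assoc matrix_vector_mul_lid
        matrix_vector_mult_0_right)
  ultimately show ?thesis using assms(4) by fastforce
qed

text \<open>Invertibility of \<open>A j\<close> is needed only to solve \<open>A j *v u = - c\<^sup>3 v\<close> for the test vector
  \<open>u\<close> of \<open>wshift_cubic_test_ineq\<close>; letting \<open>\<epsilon> \<rightarrow> 0\<close> there gives \<open>B\<^sup>2 v = c\<^sup>2 v\<close>.\<close>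
lemma cubically_hyponormal_wshift_eigen_step:
  assumes cub: "cubically_hyponormal (wshift A)"
    and pos: "\<And>n. pos_matrix (A n)" and inv: "invertible (A j)" and c: "c > 0"
    and v1: "A (j + 1) *v v = complex_of_real c *s v"
    and v2: "A (j + 2) *v v = complex_of_real c *s v"
  shows "A (j + 3) *v v = complex_of_real c *s v"
proof -
  define B where "B = A (j + 3)"
  define K where "K = c^10 * (norm v)\<^sup>2 + c\<^sup>2 * (norm (A (j + 6) *v (A (j + 5) *v (A (j + 4) *v (B *v v)))))\<^sup>2"
  obtain A' where A': "A j ** A' = mat 1" using inv unfolding invertible_def by blast
  have u: "A j *v (A' *v (- (complex_of_real c ^ 3) *s v)) = - (complex_of_real c ^ 3) *s v"
    by (simp add: matrix_vector_mul_assoc A')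
  have "c\<^sup>2 * (norm (B *v (B *v v) - complex_of_real (c\<^sup>2) *s v))\<^sup>2 \<le> e * K" if e: "e > 0" for e
  proof -
    have hyp: "hyponormal (cubic_comb (wshift A) 0 (complex_of_real (sqrt e)))"
      using cub by (simp add: cubically_hyponormal_def)
    have "e * (c\<^sup>2 * (norm (B *v (B *v v) - complex_of_real (c\<^sup>2) *s v))\<^sup>2) \<le> e * (e * K)"
      using wshift_cubic_test_ineq[OF hyp _ u v1 v2] pos_matrix_hermitian[OF pos] e
      by (simp add: B_def K_def power4_eq_xxxx power2_eq_square mult.assoc)
    then show ?thesis using e by (simp only: mult_le_cancel_left_pos)
  qed
  then have "c\<^sup>2 * (norm (B *v (B *v v) - complex_of_real (c\<^sup>2) *s v))\<^sup>2 \<le> 0"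
    by (rule nonpos_if_le_all_pos_mult)
  then have "B *v (B *v v) = complex_of_real (c\<^sup>2) *s v" using c by (simp add: mult_le_0_iff)
  then show ?thesis unfolding B_def using pos_matrix_square_eigen[OF pos c] by blast
qed

lemma cubically_hyponormal_wshift_eigen_propagate:
  assumes cub: "cubically_hyponormal (wshift A)"
    and pos: "\<And>n. pos_matrix (A n)" and inv: "\<And>n. invertible (A n)" and k: "k \<ge> 1"
    and v: "A k *v v = complex_of_real c *s v" "A (Suc k) *v v = complex_of_real c *s v"
    and n: "k \<le> n"
  shows "A n *v v = A k *v v"
proof (cases "v = 0")
  case False
  then have c: "c > 0" using pos_invertible_eigenvalue_pos[OF pos inv] v(1) by blast
  have "A n *v v = complex_of_real c *s v \<and> A (Suc n) *v v = complex_of_real c *s v"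
    using n
  proof (induction rule: dec_induct)
    case (step m)
    then have "A (m - 1 + 3) *v v = complex_of_real c *s v"
      using k by (intro cubically_hyponormal_wshift_eigen_step[OF cub pos inv c]) simp_all
    then show ?case using step k by simp
  qed (use v in simp)
  then show ?thesis using v by simp
qed simp

theorem mainTheorem3:
  fixes A :: "nat \<Rightarrow> complex^'p^'p" and x :: "complex^'p" and k :: nat
  assumes pos: "\<And>n. pos_matrix (A n)"
    and inv: "\<And>n. invertible (A n)"
    and bdd: "\<exists>M. \<forall>n. onorm (\<lambda>v. A n *v v) \<le> M"
    and cub: "cubically_hyponormal (wshift A)"
    and unit: "norm x = 1"
    and k: "k \<ge> 1"
    and eq: "A k *v x = A (Suc k) *v x"
  shows "\<forall>n\<ge>k. A n *v x = A k *v x"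
proof -
  define K where "K = {v. A (Suc k) *v v = A k *v v}"
  define P where "P = {y. \<forall>n\<ge>k. (A n - A k) *v y = 0}"
  have herm: "hermitian_matrix (A n)" for n using pos by (rule pos_matrix_hermitian)
  have K: "vec.subspace K"
    unfolding K_def vec.subspace_def by (simp add: vec.add vec.scale)
  have P: "vec.subspace P"
    unfolding P_def vec.subspace_def by (simp add: vec.add vec.scale)
  have "A k *v v \<in> K" if "v \<in> K" for v
    using that hyponormal_wshift_weight_eq_invariant[OF cubically_hyponormal_imp_hyponormal[OF cub] herm herm]
    by (simp add: K_def)
  then have "K \<subseteq> vec.span {v \<in> K. \<exists>c. A k *v v = complex_of_real c *s v}"
    by (rule hermitian_invariant_subspace_eigenvector_span[OF herm K])
  also have "\<dots> \<subseteq> P"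
  proof (rule vec.span_minimal[OF _ P], safe)
    fix v c assume "v \<in> K" "A k *v v = complex_of_real c *s v"
    then show "v \<in> P"
      using cubically_hyponormal_wshift_eigen_propagate[OF cub pos inv k, of v c]
      by (simp add: K_def P_def matrix_vector_mult_diff_rdistrib)
  qed
  finally have "x \<in> P" using eq by (auto simp: K_def)
  show ?thesis
  proof (intro allI impI)
    fix n assume "k \<le> n"
    with \<open>x \<in> P\<close> have "(A n - A k) *v x = 0" by (simp add: P_def)
    then show "A n *v x = A k *v x" by (simp add: matrix_vector_mult_diff_rdistrib)
  qed
qed

end
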